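(* Let $T$ be a complete theory with monster model $\mathbb{U}$ and let $d$ be a fibered dimension function on $\mathbb{U}$. Let $X\subseteq\mathbb{U}^n$ be a set definable with parameters in a (small) set $C$. Then there exists a tuple $a\in\mathbb{U}^n$ such that $d(a/C)=d(X)$.
   Context: A fibered dimension function is $d:\mathrm{Def}(\mathbb{U})\to\mathbb{N}\cup\{-\infty\}$ on definable (with parameters) sets such that: (1) $d(X)=-\infty$ iff $X=\emptyset$, $d(\{a\})=0$ for each $a\in\mathbb{U}$, $d(\mathbb{U})=1$; (2) $d(X\cup Y)=\max(d(X),d(Y))$; (3) $d$ is invariant under permutations of coordinates; (4) for $X\subseteq\mathbb{U}^{n+1}$ and $l\in\{0,1\}$, the set $X(l):=\{a\in\pi_n(X):d(X_a)=l\}$ is definable and $d(\{(x,y)\in X:x\in X(l)\})=d(X(l))+l$, where $\pi_n$ is projection to the first $n$ coordinates and $X_a=\{y:(a,y)\in X\}$. For a tuple $a$, $d(a/C):=\inf\{d(\varphi(\mathbb{U})):\varphi\in tp(a/C)\}$. *)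

theory Defs
  imports Main "HOL-Library.Extended_Real"
begin

text \<open>Terms and formulas of a first-order language with function symbols 'f and
relation symbols 'r (each symbol is interpreted on tuples of any length, i.e. a symbol
together with an arity).\<close>

datatype 'f trm = Var nat | Fn 'f "'f trm list"

datatype ('f, 'r) fm =
    Eq "'f trm" "'f trm"
  | Rl 'r "'f trm list"
  | Neg "('f, 'r) fm"
  | Conj "('f, 'r) fm" "('f, 'r) fm"
  | Ex nat "('f, 'r) fm"

fun eval :: "('f \<Rightarrow> 'u list \<Rightarrow> 'u) \<Rightarrow> (nat \<Rightarrow> 'u) \<Rightarrow> 'f trm \<Rightarrow> 'u" where
  "eval F v (Var i) = v i"
| "eval F v (Fn f ts) = F f (map (eval F v) ts)"

fun sat :: "('f \<Rightarrow> 'u list \<Rightarrow> 'u) \<Rightarrow> ('r \<Rightarrow> 'u list \<Rightarrow> bool) \<Rightarrow> (nat \<Rightarrow> 'u)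
             \<Rightarrow> ('f, 'r) fm \<Rightarrow> bool" where
  "sat F R v (Eq s t) = (eval F v s = eval F v t)"
| "sat F R v (Rl r ts) = R r (map (eval F v) ts)"
| "sat F R v (Neg \<phi>) = (\<not> sat F R v \<phi>)"
| "sat F R v (Conj \<phi> \<psi>) = (sat F R v \<phi> \<and> sat F R v \<psi>)"
| "sat F R v (Ex i \<phi>) = (\<exists>u. sat F R (v(i := u)) \<phi>)"

fun tvars :: "'f trm \<Rightarrow> nat set" where
  "tvars (Var i) = {i}"
| "tvars (Fn f ts) = \<Union> (set (map tvars ts))"

fun fv :: "('f, 'r) fm \<Rightarrow> nat set" where
  "fv (Eq s t) = tvars s \<union> tvars t"
| "fv (Rl r ts) = \<Union> (set (map tvars ts))"
| "fv (Neg \<phi>) = fv \<phi>"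
| "fv (Conj \<phi> \<psi>) = fv \<phi> \<union> fv \<psi>"
| "fv (Ex i \<phi>) = fv \<phi> - {i}"

text \<open>\<open>U^n\<close> is represented as the set of lists of length \<open>n\<close>.
A set \<open>X \<subseteq> U^n\<close> is definable with parameters from \<open>A\<close> if it is
\<open>\<phi>(U, c)\<close> for a formula \<open>\<phi>(x_0..x_{n-1}, y_0..y_{m-1})\<close> and a tuple
\<open>c\<close> of length \<open>m\<close> from \<open>A\<close>.\<close>

definition definable ::
  "('f \<Rightarrow> 'u list \<Rightarrow> 'u) \<Rightarrow> ('r \<Rightarrow> 'u list \<Rightarrow> bool) \<Rightarrow> 'u set \<Rightarrow> nat \<Rightarrow> 'u list set \<Rightarrow> bool" where
  "definable F R A n X \<longleftrightarrow>
     (\<exists>(\<phi> :: ('f, 'r) fm) c. fv \<phi> \<subseteq> {..< n + length c} \<and> set c \<subseteq> A \<and>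
        X = {a. length a = n \<and> sat F R (\<lambda>i. (a @ c) ! i) \<phi>})"

text \<open>\<open>\<kappa>\<close>-saturation: every partial n-type over a set of size < \<open>\<kappa>\<close>
(given by the sets it defines) that is finitely satisfiable is realised.\<close>

definition saturated ::
  "'k rel \<Rightarrow> ('f \<Rightarrow> 'u list \<Rightarrow> 'u) \<Rightarrow> ('r \<Rightarrow> 'u list \<Rightarrow> bool) \<Rightarrow> bool" where
  "saturated \<kappa> F R \<longleftrightarrow>
     (\<forall>A n \<X>. (card_of A, \<kappa>) \<in> ordLess \<longrightarrow> (\<forall>X\<in>\<X>. definable F R A n X) \<longrightarrow>
        (\<forall>\<Y>\<subseteq>\<X>. finite \<Y> \<longrightarrow> (\<exists>a. length a = n \<and> (\<forall>Y\<in>\<Y>. a \<in> Y))) \<longrightarrow>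
        (\<exists>a. length a = n \<and> (\<forall>X\<in>\<X>. a \<in> X)))"

definition automorphism ::
  "('f \<Rightarrow> 'u list \<Rightarrow> 'u) \<Rightarrow> ('r \<Rightarrow> 'u list \<Rightarrow> bool) \<Rightarrow> ('u \<Rightarrow> 'u) \<Rightarrow> bool" where
  "automorphism F R \<sigma> \<longleftrightarrow> bij \<sigma> \<and> (\<forall>f xs. \<sigma> (F f xs) = F f (map \<sigma> xs)) \<and>
     (\<forall>r xs. R r (map \<sigma> xs) = R r xs)"

definition partial_elementary ::
  "('f \<Rightarrow> 'u list \<Rightarrow> 'u) \<Rightarrow> ('r \<Rightarrow> 'u list \<Rightarrow> bool) \<Rightarrow> 'u set \<Rightarrow> ('u \<Rightarrow> 'u) \<Rightarrow> bool" where
  "partial_elementary F R A f \<longleftrightarrow>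
     (\<forall>(\<phi> :: ('f, 'r) fm) c. set c \<subseteq> A \<longrightarrow> fv \<phi> \<subseteq> {..< length c} \<longrightarrow>
        (sat F R (\<lambda>i. c ! i) \<phi> \<longleftrightarrow> sat F R (\<lambda>i. map f c ! i) \<phi>))"

definition strongly_homogeneous ::
  "'k rel \<Rightarrow> ('f \<Rightarrow> 'u list \<Rightarrow> 'u) \<Rightarrow> ('r \<Rightarrow> 'u list \<Rightarrow> bool) \<Rightarrow> bool" where
  "strongly_homogeneous \<kappa> F R \<longleftrightarrow>
     (\<forall>A f. (card_of A, \<kappa>) \<in> ordLess \<longrightarrow> partial_elementary F R A f \<longrightarrow>
        (\<exists>\<sigma>. automorphism F R \<sigma> \<and> (\<forall>x\<in>A. \<sigma> x = f x)))"

text \<open>A monster model: \<open>\<kappa>\<close>-saturated and strongly \<open>\<kappa>\<close>-homogeneous for an infinite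
cardinal \<open>\<kappa>\<close> larger than the language. "Small" means of size < \<open>\<kappa>\<close>.
(The complete theory is \<open>T = Th(U)\<close>.)\<close>

definition monster ::
  "'k rel \<Rightarrow> ('f \<Rightarrow> 'u list \<Rightarrow> 'u) \<Rightarrow> ('r \<Rightarrow> 'u list \<Rightarrow> bool) \<Rightarrow> bool" where
  "monster \<kappa> F R \<longleftrightarrow> Card_order \<kappa> \<and> infinite (Field \<kappa>) \<and>
     (card_of (UNIV :: ('f, 'r) fm set), \<kappa>) \<in> ordLess \<and>
     saturated \<kappa> F R \<and> strongly_homogeneous \<kappa> F R"

definition fiber :: "'u list set \<Rightarrow> 'u list \<Rightarrow> 'u list set" where
  "fiber X a = {[y] | y. a @ [y] \<in> X}"

definition dim_part :: "('u list set \<Rightarrow> ereal) \<Rightarrow> nat \<Rightarrow> 'u list set \<Rightarrow> nat \<Rightarrow> 'u list set" where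
  "dim_part d n X l = {a \<in> take n ` X. d (fiber X a) = ereal (real l)}"

definition fibered_dim ::
  "('f \<Rightarrow> 'u list \<Rightarrow> 'u) \<Rightarrow> ('r \<Rightarrow> 'u list \<Rightarrow> bool) \<Rightarrow> ('u list set \<Rightarrow> ereal) \<Rightarrow> bool" where
  "fibered_dim F R d \<longleftrightarrow>
     (\<forall>n X. definable F R UNIV n X \<longrightarrow> d X \<in> insert (-\<infinity>) (range (\<lambda>k::nat. ereal (real k)))) \<and>
     (\<forall>n X. definable F R UNIV n X \<longrightarrow> (d X = -\<infinity> \<longleftrightarrow> X = {})) \<and>
     (\<forall>a. d {[a]} = 0) \<and> d {a. length a = 1} = 1 \<and>
     (\<forall>n X Y. definable F R UNIV n X \<longrightarrow> definable F R UNIV n Y \<longrightarrow>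
        d (X \<union> Y) = max (d X) (d Y)) \<and>
     (\<forall>n X \<sigma>. definable F R UNIV n X \<longrightarrow> bij_betw \<sigma> {..<n} {..<n} \<longrightarrow>
        d ((\<lambda>a. map (\<lambda>i. a ! \<sigma> i) [0..<n]) ` X) = d X) \<and>
     (\<forall>n X l. definable F R UNIV (Suc n) X \<longrightarrow> l \<in> {0, 1} \<longrightarrow>
        definable F R UNIV n (dim_part d n X l) \<and>
        d {x \<in> X. take n x \<in> dim_part d n X l} = d (dim_part d n X l) + ereal (real l))"

text \<open>\<open>d(a/C)\<close>: infimum of \<open>d(\<phi>(U))\<close> over formulas \<open>\<phi> \<in> tp(a/C)\<close>, i.e. over
\<open>C\<close>-definable sets containing \<open>a\<close>.\<close>

definition dim_over ::
  "('f \<Rightarrow> 'u list \<Rightarrow> 'u) \<Rightarrow> ('r \<Rightarrow> 'u list \<Rightarrow> bool) \<Rightarrow> ('u list set \<Rightarrow> ereal) \<Rightarrow> 'u list \<Rightarrow> 'u set \<Rightarrow> ereal" where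
  "dim_over F R d a C = (INF X \<in> {X. definable F R C (length a) X \<and> a \<in> X}. d X)"

end

theory Submission
  imports Defs
begin

text \<open>Let \<open>\<D>\<close> be the \<open>C\<close>-definable sets of dimension \<open>< d(X)\<close>. A finite union of members
of \<open>\<D>\<close> still has dimension \<open>< d(X)\<close>, so by monotonicity of \<open>d\<close> it cannot cover \<open>X\<close>.
Hence \<open>X\<close> together with the complements of the members of \<open>\<D>\<close> is finitely satisfiable,
and saturation yields \<open>a \<in> X\<close> lying in no member of \<open>\<D>\<close>; every \<open>C\<close>-definable set
containing \<open>a\<close> then has dimension \<open>\<ge> d(X)\<close>, i.e. \<open>d(a/C) = d(X)\<close>.\<close>

fun rename_trm :: "(nat \<Rightarrow> nat) \<Rightarrow> 'f trm \<Rightarrow> 'f trm" where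
  "rename_trm \<rho> (Var i) = Var (\<rho> i)"
| "rename_trm \<rho> (Fn f ts) = Fn f (map (rename_trm \<rho>) ts)"

fun rename_fm :: "(nat \<Rightarrow> nat) \<Rightarrow> ('f, 'r) fm \<Rightarrow> ('f, 'r) fm" where
  "rename_fm \<rho> (Eq s t) = Eq (rename_trm \<rho> s) (rename_trm \<rho> t)"
| "rename_fm \<rho> (Rl r ts) = Rl r (map (rename_trm \<rho>) ts)"
| "rename_fm \<rho> (Neg \<phi>) = Neg (rename_fm \<rho> \<phi>)"
| "rename_fm \<rho> (Conj \<phi> \<psi>) = Conj (rename_fm \<rho> \<phi>) (rename_fm \<rho> \<psi>)"
| "rename_fm \<rho> (Ex i \<phi>) = Ex (\<rho> i) (rename_fm \<rho> \<phi>)"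

lemma eval_rename_trm: "eval F v (rename_trm \<rho> t) = eval F (v \<circ> \<rho>) t"
  by (induction t) (auto cong: map_cong)

lemma tvars_rename_trm: "tvars (rename_trm \<rho> t) = \<rho> ` tvars t"
  by (induction t) auto

lemma sat_rename_fm:
  assumes "inj \<rho>"
  shows "sat F R v (rename_fm \<rho> \<phi>) = sat F R (v \<circ> \<rho>) \<phi>"
proof (induction \<phi> arbitrary: v)
  case (Ex i \<phi>)
  have "(v(\<rho> i := u)) \<circ> \<rho> = (v \<circ> \<rho>)(i := u)" for u
    using assms by (auto simp: inj_def)
  then have "sat F R (v(\<rho> i := u)) (rename_fm \<rho> \<phi>) = sat F R ((v \<circ> \<rho>)(i := u)) \<phi>" for u
    using Ex.IH by metis
  then show ?case by (simp only: rename_fm.simps sat.simps)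
qed (auto simp: eval_rename_trm comp_def)

lemma fv_rename_fm: "inj \<rho> \<Longrightarrow> fv (rename_fm \<rho> \<phi>) = \<rho> ` fv \<phi>"
  by (induction \<phi>) (auto simp: tvars_rename_trm image_set_diff image_Union)

lemma eval_cong: "(\<And>i. i \<in> tvars t \<Longrightarrow> v i = w i) \<Longrightarrow> eval F v t = eval F w t"
proof (induction t)
  case (Fn f ts)
  then have "map (eval F v) ts = map (eval F w) ts"
    by (intro map_cong) auto
  then show ?case by (simp only: eval.simps)
qed simp

lemma sat_cong: "(\<And>i. i \<in> fv \<phi> \<Longrightarrow> v i = w i) \<Longrightarrow> sat F R v \<phi> = sat F R w \<phi>"
proof (induction \<phi> arbitrary: v w)
  case (Eq s t)
  then have "eval F v s = eval F w s" "eval F v t = eval F w t"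
    by (auto intro: eval_cong)
  then show ?case by (simp only: sat.simps)
next
  case (Rl r ts)
  then have "map (eval F v) ts = map (eval F w) ts"
    by (intro map_cong refl eval_cong) auto
  then show ?case by (simp only: sat.simps)
next
  case (Neg \<phi>)
  then show ?case by (metis fv.simps(3) sat.simps(3))
next
  case (Conj \<phi> \<psi>)
  then show ?case by (metis UnCI fv.simps(4) sat.simps(4))
next
  case (Ex i \<phi>)
  then have "sat F R (v(i := u)) \<phi> = sat F R (w(i := u)) \<phi>" for u
    by (intro Ex.IH) auto
  then show ?case by (simp only: sat.simps)
qed

lemma definable_length: "definable F R A n X \<Longrightarrow> a \<in> X \<Longrightarrow> length a = n"
  unfolding definable_def by auto

lemma definable_mono_params: "definable F R A n X \<Longrightarrow> A \<subseteq> B \<Longrightarrow> definable F R B n X"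
  unfolding definable_def by blast

lemma definable_empty: "definable F R A n {}"
  unfolding definable_def
  by (rule exI[of _ "Ex 0 (Neg (Eq (Var 0) (Var 0)))"], rule exI[of _ "[]"]) auto

lemma definable_complement:
  assumes "definable F R A n X"
  shows "definable F R A n {a. length a = n \<and> a \<notin> X}"
proof -
  obtain \<phi> c where "fv \<phi> \<subseteq> {..< n + length c}" "set c \<subseteq> A"
    "X = {a. length a = n \<and> sat F R (\<lambda>i. (a @ c) ! i) \<phi>}"
    using assms unfolding definable_def by blast
  then show ?thesis
    unfolding definable_def by (intro exI[of _ "Neg \<phi>"] exI[of _ c]) auto
qed

lemma definable_Un:
  assumes "definable F R A n X" "definable F R A n Y"
  shows "definable F R A n (X \<union> Y)"
proof -
  obtain \<phi> c1 where \<phi>: "fv \<phi> \<subseteq> {..< n + length c1}" "set c1 \<subseteq> A"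
    "X = {a. length a = n \<and> sat F R (\<lambda>i. (a @ c1) ! i) \<phi>}"
    using assms(1) unfolding definable_def by blast
  obtain \<psi> c2 where \<psi>: "fv \<psi> \<subseteq> {..< n + length c2}" "set c2 \<subseteq> A"
    "Y = {a. length a = n \<and> sat F R (\<lambda>i. (a @ c2) ! i) \<psi>}"
    using assms(2) unfolding definable_def by blast
  \<comment> \<open>shift the parameter variables of \<open>\<psi>\<close> past those of \<open>\<phi>\<close>, so both read parameters \<open>c1 @ c2\<close>\<close>
  define \<rho> where "\<rho> j = (if j < n then j else j + length c1)" for j
  have inj: "inj \<rho>" unfolding \<rho>_def inj_def by auto
  define \<theta> where "\<theta> = Neg (Conj (Neg \<phi>) (Neg (rename_fm \<rho> \<psi>)))"
  have fv_\<theta>: "fv \<theta> \<subseteq> {..< n + length (c1 @ c2)}"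
    using \<phi>(1) \<psi>(1) by (auto simp: \<theta>_def fv_rename_fm[OF inj] \<rho>_def subset_eq)
  have sat_\<phi>: "sat F R (\<lambda>i. (a @ c1 @ c2) ! i) \<phi> = sat F R (\<lambda>i. (a @ c1) ! i) \<phi>"
    if "length a = n" for a
    by (rule sat_cong) (use \<phi>(1) that in \<open>auto simp: nth_append\<close>)
  have sat_\<psi>: "sat F R (\<lambda>i. (a @ c1 @ c2) ! i) (rename_fm \<rho> \<psi>) = sat F R (\<lambda>i. (a @ c2) ! i) \<psi>"
    if "length a = n" for a
    unfolding sat_rename_fm[OF inj]
    by (rule sat_cong) (use \<psi>(1) that in \<open>auto simp: nth_append \<rho>_def\<close>)
  have "X \<union> Y = {a. length a = n \<and> sat F R (\<lambda>i. (a @ c1 @ c2) ! i) \<theta>}"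
    using \<phi>(3) \<psi>(3) sat_\<phi> sat_\<psi> by (auto simp: \<theta>_def)
  moreover have "set (c1 @ c2) \<subseteq> A"
    using \<phi>(2) \<psi>(2) by simp
  ultimately show ?thesis
    using fv_\<theta> unfolding definable_def by blast
qed

lemma saturated_avoid_all:
  fixes X :: "'u list set"
  assumes "saturated \<kappa> F R" and "(card_of C, \<kappa>) \<in> ordLess"
    and "definable F R C n X" and "\<And>Y. Y \<in> \<D> \<Longrightarrow> definable F R C n Y"
    and no_finite_cover: "\<And>\<S>. finite \<S> \<Longrightarrow> \<S> \<subseteq> \<D> \<Longrightarrow> \<not> X \<subseteq> \<Union>\<S>"
  shows "\<exists>a\<in>X. \<forall>Y\<in>\<D>. a \<notin> Y"
proof -
  define compl where "compl Y = {a. length a = n \<and> a \<notin> Y}" for Y :: "'u list set"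
  define \<Sigma> where "\<Sigma> = insert X (compl ` \<D>)"
  have "definable F R C n (compl Y)" if "Y \<in> \<D>" for Y
    unfolding compl_def using assms(4)[OF that] by (rule definable_complement)
  with assms(3) have definable_\<Sigma>: "definable F R C n Z" if "Z \<in> \<Sigma>" for Z
    using that unfolding \<Sigma>_def by blast
  have finitely_sat_\<Sigma>: "\<exists>a. length a = n \<and> (\<forall>Z\<in>\<Y>. a \<in> Z)"
    if "\<Y> \<subseteq> \<Sigma>" "finite \<Y>" for \<Y>
  proof -
    from that have "\<Y> - {X} \<subseteq> compl ` \<D>" "finite (\<Y> - {X})"
      unfolding \<Sigma>_def by auto
    then obtain \<S> where \<S>: "\<S> \<subseteq> \<D>" "finite \<S>" "\<Y> - {X} = compl ` \<S>"
      by (meson finite_subset_image)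
    obtain a where a: "a \<in> X" "a \<notin> \<Union>\<S>"
      using no_finite_cover[OF \<S>(2,1)] by blast
    have "length a = n"
      using assms(3) \<open>a \<in> X\<close> by (rule definable_length)
    have "a \<in> Z" if "Z \<in> \<Y>" for Z
    proof (cases "Z = X")
      case False
      with \<open>Z \<in> \<Y>\<close> \<S>(3) obtain Y where "Y \<in> \<S>" "Z = compl Y" by blast
      with a \<open>length a = n\<close> show ?thesis unfolding compl_def by blast
    qed (use a in simp)
    with \<open>length a = n\<close> show ?thesis by blast
  qed
  obtain a where a: "length a = n" "\<forall>Z\<in>\<Sigma>. a \<in> Z"
    using assms(1)[unfolded saturated_def, rule_format, OF assms(2) definable_\<Sigma> finitely_sat_\<Sigma>]
    by blast
  have "a \<notin> Y" if "Y \<in> \<D>" for Y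
    using a that unfolding \<Sigma>_def compl_def by auto
  moreover have "a \<in> X"
    using a unfolding \<Sigma>_def by simp
  ultimately show ?thesis by blast
qed

lemma dim_over_eqI:
  assumes "definable F R C (length a) X" "a \<in> X"
    and "\<And>Y. definable F R C (length a) Y \<Longrightarrow> a \<in> Y \<Longrightarrow> d X \<le> d Y"
  shows "dim_over F R d a C = d X"
  unfolding dim_over_def
proof (rule antisym)
  show "(INF Y\<in>{Y. definable F R C (length a) Y \<and> a \<in> Y}. d Y) \<le> d X"
    using assms(1,2) by (auto intro: INF_lower2)
  show "d X \<le> (INF Y\<in>{Y. definable F R C (length a) Y \<and> a \<in> Y}. d Y)"
    using assms(3) by (auto intro: INF_greatest)
qed

context
  fixes F :: "'f \<Rightarrow> 'u list \<Rightarrow> 'u" and R :: "'r \<Rightarrow> 'u list \<Rightarrow> bool"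
    and d :: "'u list set \<Rightarrow> ereal"
  assumes fibered: "fibered_dim F R d"
begin

lemma fibered_dim_eq_bot_iff:
  assumes "definable F R A n X"
  shows "d X = -\<infinity> \<longleftrightarrow> X = {}"
proof -
  have "definable F R UNIV n X" using assms by (rule definable_mono_params) simp
  with fibered show ?thesis unfolding fibered_dim_def by blast
qed

lemma fibered_dim_Un:
  assumes "definable F R A n X" "definable F R A n Y"
  shows "d (X \<union> Y) = max (d X) (d Y)"
proof -
  have "definable F R UNIV n X" "definable F R UNIV n Y"
    using assms by (auto intro: definable_mono_params)
  with fibered show ?thesis unfolding fibered_dim_def by blast
qed

lemma fibered_dim_mono:
  assumes "definable F R A n X" "definable F R A n Y" "X \<subseteq> Y"
  shows "d X \<le> d Y"
proof -
  have "d Y = d (X \<union> Y)" using assms(3) by (simp add: sup_absorb2)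
  also have "\<dots> = max (d X) (d Y)" using assms(1,2) by (rule fibered_dim_Un)
  finally show ?thesis by (simp add: max_def split: if_splits)
qed

lemma fibered_dim_Union_less:
  assumes "finite \<S>" "\<And>Y. Y \<in> \<S> \<Longrightarrow> definable F R A n Y \<and> d Y < b" "b \<noteq> -\<infinity>"
  shows "definable F R A n (\<Union>\<S>) \<and> d (\<Union>\<S>) < b"
  using assms(1,2)
proof (induction \<S> rule: finite_induct)
  case empty
  have "d {} = -\<infinity>" using fibered_dim_eq_bot_iff[OF definable_empty] by simp
  with assms(3) show ?case by (simp add: definable_empty)
next
  case (insert Y \<S>)
  then have "definable F R A n Y" "d Y < b" "definable F R A n (\<Union>\<S>)" "d (\<Union>\<S>) < b"
    by auto
  then show ?case by (simp add: fibered_dim_Un definable_Un)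
qed

lemma fibered_dim_not_subset_Union_less:
  assumes "definable F R A n X" "X \<noteq> {}"
    and "finite \<S>" "\<And>Y. Y \<in> \<S> \<Longrightarrow> definable F R A n Y \<and> d Y < d X"
  shows "\<not> X \<subseteq> \<Union>\<S>"
proof
  assume "X \<subseteq> \<Union>\<S>"
  have "d X \<noteq> -\<infinity>"
    using fibered_dim_eq_bot_iff[OF assms(1)] assms(2) by simp
  with assms(3,4) have "definable F R A n (\<Union>\<S>) \<and> d (\<Union>\<S>) < d X"
    by (rule fibered_dim_Union_less)
  with fibered_dim_mono[OF assms(1) _ \<open>X \<subseteq> \<Union>\<S>\<close>] show False
    by auto
qed

end

theorem proposition1p7:
  fixes F :: "'f \<Rightarrow> 'u list \<Rightarrow> 'u" and R :: "'r \<Rightarrow> 'u list \<Rightarrow> bool"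
    and \<kappa> :: "'k rel" and d :: "'u list set \<Rightarrow> ereal"
    and C :: "'u set" and X :: "'u list set" and n :: nat
  assumes "monster \<kappa> F R"
    and "fibered_dim F R d"
    and "(card_of C, \<kappa>) \<in> ordLess"
    and "definable F R C n X"
    and "X \<noteq> {}"
  shows "\<exists>a. length a = n \<and> dim_over F R d a C = d X"
proof -
  define \<D> where "\<D> = {Y. definable F R C n Y \<and> d Y < d X}"
  have "\<not> X \<subseteq> \<Union>\<S>" if "finite \<S>" "\<S> \<subseteq> \<D>" for \<S>
    using fibered_dim_not_subset_Union_less[OF assms(2,4,5) that(1)] that(2)
    unfolding \<D>_def by blast
  then obtain a where "a \<in> X" and avoids: "\<forall>Y\<in>\<D>. a \<notin> Y"
    using saturated_avoid_all[OF _ assms(3,4), of \<D>] assms(1)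
    unfolding monster_def \<D>_def by blast
  have "length a = n" using assms(4) \<open>a \<in> X\<close> by (rule definable_length)
  have "dim_over F R d a C = d X"
  proof (rule dim_over_eqI)
    show "d X \<le> d Y" if "definable F R C (length a) Y" "a \<in> Y" for Y
      using that avoids \<open>length a = n\<close> unfolding \<D>_def by (auto simp: not_less[symmetric])
  qed (use assms(4) \<open>a \<in> X\<close> \<open>length a = n\<close> in auto)
  with \<open>length a = n\<close> show ?thesis by blast
qed

end
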